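(* Let $a_1,\dots,a_8$ be pairwise distinct positive reals and $\mathscr H_{\mathrm{small}}=\{P^{(0)}_1(a_i): i=1,\dots,4\}\cup\{P^{(1)}_2(a_i,0): i=5,\dots,8\}$. If the simple one-layer GNN satisfies $h^{(1)}_u(G)=x_u(\Gamma(G))$ for every $G\in\mathscr H_{\mathrm{small}}$ and every $u\in V(G)$, then for every $G\in\mathscr G$ and every $v\in V(G)$, $$h^{(1)}_v(G)=\min\{x_u+x_{(u,v)}:u\in\mathcal N(v)\}=x_v(\Gamma(G)).$$
   Context: Attributed graphs: $G=(V,E,X_{\mathrm v},X_{\mathrm e})$ with $V$ finite, $E$ a set of undirected edges, nonnegative edge weights $x_{(u,v)}=x_{(v,u)}\ge 0$ and nonnegative real node features $x_v$. Every node carries a self-loop of weight $x_{(v,v)}=0$, and $\mathcal N(v)=\{v\}\cup\{u:\{u,v\}\in E\}$. A constant $\beta>0$ is fixed; $\mathscr G$ is the set of attributed graphs with $\sum_{e\in E}x_e<\beta$. $x_v(H)$ denotes the feature of node $v$ in graph $H$. The Bellman–Ford operator $\Gamma$ sends $G$ to the graph with the same vertices, edges and edge weights and node features $x'_v=\min\{x_u+x_{(u,v)}:u\in\mathcal N(v)\}$. For a source $s$, $\mathrm d^{(t)}(s,v)$ is the minimal total weight of a walk from $s$ to $v$ with at most $t$ edges, or $\beta$ if none exists. $P^{(t)}_k(a_1,\dots,a_k)$ is the path graph with vertices $v_0,\dots,v_k$, edges $\{v_{i-1},v_i\}$ of weight $a_i$, and node features $x_{v_i}=\mathrm d^{(t)}(v_0,v_i)$.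 Simple one-layer GNN with parameters $w_2,W_{11},W_{12},b_1,b_2\in\mathbb R$ and $\sigma(z)=\max(z,0)$: $$h^{(1)}_v(G)=\sigma\Big(w_2\min_{u\in\mathcal N(v)}\sigma\big(W_{11}x_u+W_{12}x_{(u,v)}+b_1\big)+b_2\Big).$$
   Formalization: The graphs of $\mathscr H_{\mathrm{small}}$ are also assumed to lie in $\mathscr G$, that is $a_i<\beta$ for every i, in addition to being pairwise distinct and positive. The paper assumes this as well. *)

theory Defs
  imports Main "HOL.Real"
begin

text \<open>Attributed graphs. An undirected edge is a two-element vertex set; edge
weights are a function on such sets (hence symmetric automatically).
Self-loops are implicit and carry weight 0.\<close>

record 'v agraph =
  verts :: "'v set"
  edges :: "'v set set"
  ew    :: "'v set \<Rightarrow> real"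
  nf    :: "'v \<Rightarrow> real"

definition wf_graph :: "'v agraph \<Rightarrow> bool" where
  "wf_graph G \<longleftrightarrow> finite (verts G) \<and>
     (\<forall>e\<in>edges G. e \<subseteq> verts G \<and> card e = 2)"

definition wt :: "'v agraph \<Rightarrow> 'v \<Rightarrow> 'v \<Rightarrow> real" where
  "wt G u v = (if u = v then 0 else ew G {u, v})"

definition nbhd :: "'v agraph \<Rightarrow> 'v \<Rightarrow> 'v set" where
  "nbhd G v = {v} \<union> {u. {u, v} \<in> edges G}"

definition graphs_below :: "real \<Rightarrow> 'v agraph set" where
  "graphs_below \<beta> = {G. wf_graph G \<and>
      (\<forall>e\<in>edges G. 0 \<le> ew G e) \<and> (\<forall>v\<in>verts G. 0 \<le> nf G v) \<and>
      (\<Sum>e\<in>edges G. ew G e) < \<beta>}"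

definition bf :: "'v agraph \<Rightarrow> 'v agraph" where
  "bf G = G\<lparr>nf := (\<lambda>v. Min ((\<lambda>u. nf G u + wt G u v) ` nbhd G v))\<rparr>"

definition relu :: "real \<Rightarrow> real" where
  "relu z = max z 0"

definition gnn :: "real \<Rightarrow> real \<Rightarrow> real \<Rightarrow> real \<Rightarrow> real \<Rightarrow> 'v agraph \<Rightarrow> 'v \<Rightarrow> real" where
  "gnn w2 W11 W12 b1 b2 G v =
     relu (w2 * Min ((\<lambda>u. relu (W11 * nf G u + W12 * wt G u v + b1)) ` nbhd G v) + b2)"

definition is_walk :: "'v agraph \<Rightarrow> 'v list \<Rightarrow> bool" where
  "is_walk G xs \<longleftrightarrow> xs \<noteq> [] \<and> set xs \<subseteq> verts G \<and>
     (\<forall>i. Suc i < length xs \<longrightarrow> {xs ! i, xs ! Suc i} \<in> edges G)"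

definition walk_weight :: "'v agraph \<Rightarrow> 'v list \<Rightarrow> real" where
  "walk_weight G xs = (\<Sum>i<length xs - 1. ew G {xs ! i, xs ! Suc i})"

definition dist_t :: "real \<Rightarrow> nat \<Rightarrow> 'v agraph \<Rightarrow> 'v \<Rightarrow> 'v \<Rightarrow> real" where
  "dist_t \<beta> t G s v =
     (let W = {walk_weight G xs | xs. is_walk G xs \<and> hd xs = s \<and> last xs = v
                                     \<and> length xs \<le> Suc t}
      in if W = {} then \<beta> else Min W)"

text \<open>Path graph on vertices 0..k with edge {i-1,i} of weight as!(i-1), no features yet.\<close>
definition path_base :: "real list \<Rightarrow> nat agraph" where
  "path_base as = \<lparr>verts = {0..length as},
      edges = {{i - 1, i} | i. 1 \<le> i \<and> i \<le> length as},
      ew = (\<lambda>e. if e \<in> {{i - 1, i} | i. 1 \<le> i \<and> i \<le> length as} then as ! Min e else 0),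
      nf = (\<lambda>_. 0)\<rparr>"

definition path_graph :: "real \<Rightarrow> nat \<Rightarrow> real list \<Rightarrow> nat agraph" where
  "path_graph \<beta> t as = (path_base as)\<lparr>nf := (\<lambda>v. dist_t \<beta> t (path_base as) 0 v)\<rparr>"

end

theory Submission
  imports Defs
begin

(* On each training graph the fitted vertex yields an equation
   w2 * min C (relu (p * x + b1)) + b2 = x, where C = relu (W11 * beta + b1) comes from the
   endpoint not yet reached by the walks, whose feature is beta. The left-hand side takes only the
   two values w2 * C + b2 and b2 or agrees with the affine map x -> w2 * (p * x + b1) + b2, so four
   distinct solutions force that map to be the identity: the one-edge graphs give this for p = W12,
   the two-edge graphs, whose last edge weighs 0, for p = W11. The remaining training constraints
   rule out w2 < 0 and b1 < 0. Then W11 = W12 = 1 / w2 and b2 = - w2 * b1, so the inner relu never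
   clips the nonnegative sums x_u + x_(u,v), and the increasing affine map commutes with Min. *)

lemma dist_t_zero:
  assumes "s \<in> verts G"
  shows "dist_t \<beta> 0 G s v = (if v = s then 0 else \<beta>)"
proof -
  have "{walk_weight G xs | xs. is_walk G xs \<and> hd xs = s \<and> last xs = v \<and> length xs \<le> Suc 0}
      = (if v = s then {0} else {})"
  proof (intro set_eqI iffI)
    fix w assume "w \<in> {walk_weight G xs | xs. is_walk G xs \<and> hd xs = s \<and> last xs = v \<and> length xs \<le> Suc 0}"
    then obtain xs where "w = walk_weight G xs" "xs \<noteq> []" "hd xs = s" "last xs = v" "length xs \<le> Suc 0"
      by (auto simp: is_walk_def)
    then show "w \<in> (if v = s then {0} else {})"
      by (cases xs) (auto simp: walk_weight_def)
  next
    fix w :: real assume "w \<in> (if v = s then {0} else {})"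
    with assms show "w \<in> {walk_weight G xs | xs. is_walk G xs \<and> hd xs = s \<and> last xs = v \<and> length xs \<le> Suc 0}"
      by (auto simp: is_walk_def walk_weight_def split: if_splits intro!: exI[of _ "[s]"])
  qed
  then show ?thesis
    by (simp add: dist_t_def)
qed

lemma dist_t_one:
  assumes "s \<in> verts G" "v \<in> verts G" "s \<noteq> v"
  shows "dist_t \<beta> 1 G s v = (if {s, v} \<in> edges G then ew G {s, v} else \<beta>)"
proof -
  have walk: "is_walk G [s, v] \<longleftrightarrow> {s, v} \<in> edges G"
    using assms by (auto simp: is_walk_def less_Suc_eq)
  have "{walk_weight G xs | xs. is_walk G xs \<and> hd xs = s \<and> last xs = v \<and> length xs \<le> Suc 1}
      = (if {s, v} \<in> edges G then {ew G {s, v}} else {})"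
  proof (intro set_eqI iffI)
    fix w assume "w \<in> {walk_weight G xs | xs. is_walk G xs \<and> hd xs = s \<and> last xs = v \<and> length xs \<le> Suc 1}"
    then obtain xs where xs: "w = walk_weight G xs" "is_walk G xs" "hd xs = s" "last xs = v" "length xs \<le> 2"
      by auto
    then have "xs = [s, v]"
      using assms(3) by (cases xs rule: remdups_adj.cases) (auto simp: is_walk_def)
    with xs walk show "w \<in> (if {s, v} \<in> edges G then {ew G {s, v}} else {})"
      by (simp add: walk_weight_def)
  next
    fix w assume "w \<in> (if {s, v} \<in> edges G then {ew G {s, v}} else {})"
    with walk show "w \<in> {walk_weight G xs | xs. is_walk G xs \<and> hd xs = s \<and> last xs = v \<and> length xs \<le> Suc 1}"
      by (auto simp: walk_weight_def split: if_splits intro!: exI[of _ "[s, v]"])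
  qed
  then show ?thesis
    by (simp add: dist_t_def)
qed

lemma edge_path_base_iff:
  "{u, v} \<in> edges (path_base as) \<longleftrightarrow> (Suc u = v \<or> Suc v = u) \<and> max u v \<le> length as"
  unfolding path_base_def by (auto simp: doubleton_eq_iff intro!: exI[of _ "max u v"])

lemma edges_path_base: "edges (path_base as) = (\<lambda>i. {i, Suc i}) ` {..<length as}"
  unfolding path_base_def by (force intro: exI[of _ "Suc i" for i])

lemma ew_path_base:
  assumes "Suc i \<le> length as"
  shows "ew (path_base as) {i, Suc i} = as ! i"
proof -
  have "{i, Suc i} \<in> edges (path_base as)"
    using assms by (simp add: edge_path_base_iff)
  then show ?thesis
    by (simp add: path_base_def)
qed

lemma edges_path_graph [simp]: "edges (path_graph \<beta> t as) = edges (path_base as)"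
  and ew_path_graph [simp]: "ew (path_graph \<beta> t as) = ew (path_base as)"
  and verts_path_graph [simp]: "verts (path_graph \<beta> t as) = {0..length as}"
  and nf_path_graph: "nf (path_graph \<beta> t as) = dist_t \<beta> t (path_base as) 0"
  by (simp_all add: path_graph_def path_base_def)

lemma verts_path_base [simp]: "verts (path_base as) = {0..length as}"
  by (simp add: path_base_def)

lemma bf_nf: "nf (bf G) v = Min ((\<lambda>u. nf G u + wt G u v) ` nbhd G v)"
  by (simp add: bf_def)

lemma bf_nf_single_neighbour:
  assumes "nbhd G v = {v, u}"
  shows "nf (bf G) v = min (nf G v) (nf G u + wt G u v)"
  by (simp add: bf_nf assms wt_def)

lemma gnn_single_neighbour:
  assumes "nbhd G v = {v, u}"
  shows "gnn w2 W11 W12 b1 b2 G v =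
    relu (w2 * min (relu (W11 * nf G v + b1)) (relu (W11 * nf G u + W12 * wt G u v + b1)) + b2)"
  by (simp add: gnn_def assms wt_def)

lemma relu_eq_pos: "relu z = x \<Longrightarrow> 0 < x \<Longrightarrow> z = x"
  by (auto simp: relu_def max_def split: if_splits)

lemma single_edge_training:
  fixes a :: real
  assumes "path_graph \<beta> 0 [a] \<in> graphs_below \<beta>" "0 < a"
    and fit: "\<forall>u\<in>verts (path_graph \<beta> 0 [a]).
        gnn w2 W11 W12 b1 b2 (path_graph \<beta> 0 [a]) u = nf (bf (path_graph \<beta> 0 [a])) u"
  shows "a < \<beta>"
    and "w2 * min (relu (W11 * \<beta> + b1)) (relu (W12 * a + b1)) + b2 = a"
    and "relu (w2 * min (relu b1) (relu (W11 * \<beta> + W12 * a + b1)) + b2) = 0"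
proof -
  let ?P = "path_graph \<beta> 0 [a]"
  have ew: "ew (path_base [a]) {0, Suc 0} = a"
    using ew_path_base[of 0 "[a]"] by simp
  have edges: "edges (path_base [a]) = {{0, 1}}"
    by (simp add: edges_path_base lessThan_Suc)
  show "a < \<beta>"
    using assms(1) by (simp add: graphs_below_def edges ew)
  have nf: "nf ?P 0 = 0" "nf ?P 1 = \<beta>"
    by (simp_all add: nf_path_graph dist_t_zero)
  have wt: "wt ?P 0 1 = a" "wt ?P 1 0 = a"
    using ew by (simp_all add: wt_def insert_commute)
  have nbhd: "nbhd ?P 0 = {0, 1}" "nbhd ?P 1 = {1, 0}"
    by (auto simp: nbhd_def edge_path_base_iff)
  have "relu (w2 * min (relu (W11 * \<beta> + b1)) (relu (W12 * a + b1)) + b2) = gnn w2 W11 W12 b1 b2 ?P 1"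
    unfolding gnn_single_neighbour[OF nbhd(2)] nf wt by simp
  also have "\<dots> = nf (bf ?P) 1"
    using fit by simp
  also have "\<dots> = a"
    unfolding bf_nf_single_neighbour[OF nbhd(2)] nf wt using \<open>a < \<beta>\<close> by simp
  finally show "w2 * min (relu (W11 * \<beta> + b1)) (relu (W12 * a + b1)) + b2 = a"
    using \<open>0 < a\<close> by (rule relu_eq_pos)
  have "relu (w2 * min (relu b1) (relu (W11 * \<beta> + W12 * a + b1)) + b2) = gnn w2 W11 W12 b1 b2 ?P 0"
    unfolding gnn_single_neighbour[OF nbhd(1)] nf wt by simp
  also have "\<dots> = nf (bf ?P) 0"
    using fit by simp
  also have "\<dots> = 0"
    unfolding bf_nf_single_neighbour[OF nbhd(1)] nf wt using \<open>0 < a\<close> \<open>a < \<beta>\<close> by simp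
  finally show "relu (w2 * min (relu b1) (relu (W11 * \<beta> + W12 * a + b1)) + b2) = 0" .
qed

lemma two_edge_training:
  fixes a :: real
  assumes "path_graph \<beta> 1 [a, 0] \<in> graphs_below \<beta>" "0 < a"
    and fit: "\<forall>u\<in>verts (path_graph \<beta> 1 [a, 0]).
        gnn w2 W11 W12 b1 b2 (path_graph \<beta> 1 [a, 0]) u = nf (bf (path_graph \<beta> 1 [a, 0])) u"
  shows "w2 * min (relu (W11 * \<beta> + b1)) (relu (W11 * a + b1)) + b2 = a"
proof -
  let ?P = "path_graph \<beta> 1 [a, 0]"
  have ew: "ew (path_base [a, 0]) {0, Suc 0} = a" "ew (path_base [a, 0]) {Suc 0, 2} = 0"
    using ew_path_base[of 0 "[a, 0]"] ew_path_base[of 1 "[a, 0]"] by (simp_all add: numeral_2_eq_2)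
  have edges: "edges (path_base [a, 0]) = {{0, 1}, {1, 2}}"
    by (simp add: edges_path_base lessThan_Suc numeral_2_eq_2 insert_commute)
  have "a < \<beta>"
    using assms(1) ew by (simp add: graphs_below_def edges doubleton_eq_iff)
  have nf: "nf ?P 1 = a" "nf ?P 2 = \<beta>"
    unfolding nf_path_graph
    using dist_t_one[of 0 "path_base [a, 0]" 1 \<beta>] dist_t_one[of 0 "path_base [a, 0]" 2 \<beta>]
    by (simp_all add: edge_path_base_iff ew)
  have wt: "wt ?P 1 2 = 0"
    by (simp add: wt_def ew)
  have nbhd: "nbhd ?P 2 = {2, 1}"
    by (auto simp: nbhd_def edge_path_base_iff)
  have "relu (w2 * min (relu (W11 * \<beta> + b1)) (relu (W11 * a + b1)) + b2) = gnn w2 W11 W12 b1 b2 ?P 2"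
    unfolding gnn_single_neighbour[OF nbhd] nf wt by (simp add: min.commute)
  also have "\<dots> = nf (bf ?P) 2"
    using fit by simp
  also have "\<dots> = a"
    unfolding bf_nf_single_neighbour[OF nbhd] nf wt using \<open>a < \<beta>\<close> by simp
  finally show ?thesis
    using \<open>0 < a\<close> by (rule relu_eq_pos)
qed

lemma affine_fixed_point_unique:
  fixes \<alpha> \<gamma> x y :: real
  assumes "\<alpha> * x + \<gamma> = x" "\<alpha> * y + \<gamma> = y" "\<not> (\<alpha> = 1 \<and> \<gamma> = 0)"
  shows "x = y"
proof (cases "\<alpha> = 1")
  case True
  then show ?thesis using assms by simp
next
  case False
  have "(\<alpha> - 1) * (x - y) = 0"
    using assms(1,2) by (simp add: algebra_simps)
  with False show ?thesis by simp
qed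

lemma min_relu_fit_on_four_points:
  fixes X :: "real set"
  assumes card: "4 \<le> card X"
    and fit: "\<And>x. x \<in> X \<Longrightarrow> w2 * min C (relu (p * x + b1)) + b2 = x"
  shows "w2 * p = 1 \<and> w2 * b1 + b2 = 0"
proof (rule ccontr)
  assume not_id: "\<not> (w2 * p = 1 \<and> w2 * b1 + b2 = 0)"
  let ?R = "{x \<in> X. (w2 * p) * x + (w2 * b1 + b2) = x}"
  have "finite X"
    using card card.infinite by fastforce
  then have "finite ?R"
    by simp
  have "card ?R \<le> 1"
    unfolding card_le_Suc0_iff_eq[OF \<open>finite ?R\<close>, folded One_nat_def]
    using affine_fixed_point_unique not_id by blast
  have "X \<subseteq> {w2 * C + b2, b2} \<union> ?R"
  proof
    fix x assume "x \<in> X"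
    have "min C (relu (p * x + b1)) \<in> {C, 0, p * x + b1}"
      by (simp add: min_def relu_def max_def)
    then consider "min C (relu (p * x + b1)) = C" | "min C (relu (p * x + b1)) = 0"
      | "min C (relu (p * x + b1)) = p * x + b1"
      by blast
    then show "x \<in> {w2 * C + b2, b2} \<union> ?R"
      using fit[OF \<open>x \<in> X\<close>] \<open>x \<in> X\<close> by cases (simp_all add: algebra_simps)
  qed
  then have "card X \<le> card ({w2 * C + b2, b2} \<union> ?R)"
    using \<open>finite ?R\<close> by (intro card_mono) auto
  also have "\<dots> \<le> card {w2 * C + b2, b2} + card ?R"
    by (rule card_Un_le)
  also have "\<dots> \<le> 3"
    using \<open>card ?R \<le> 1\<close> by (cases "w2 * C + b2 = b2") auto
  finally show False
    using card by simp
qed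

lemma fitted_slope_positive:
  fixes X :: "real set"
  assumes "w2 * W = 1" "2 \<le> card X" and below: "\<forall>x\<in>X. x < \<beta>"
    and fit: "\<And>x. x \<in> X \<Longrightarrow> w2 * min (relu (W * \<beta> + b1)) (relu (W * x + b1)) + b2 = x"
  shows "0 < w2"
proof (rule ccontr)
  assume "\<not> 0 < w2"
  then have "W < 0"
    using \<open>w2 * W = 1\<close> by (metis mult_nonpos_nonneg not_less zero_less_one not_le)
  have "X \<subseteq> {w2 * relu (W * \<beta> + b1) + b2}"
  proof
    fix x assume "x \<in> X"
    then have "W * \<beta> < W * x"
      using \<open>W < 0\<close> below by simp
    then have "relu (W * \<beta> + b1) \<le> relu (W * x + b1)"
      by (simp add: relu_def)
    then have "min (relu (W * \<beta> + b1)) (relu (W * x + b1)) = relu (W * \<beta> + b1)"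
      by (rule min_absorb1)
    then show "x \<in> {w2 * relu (W * \<beta> + b1) + b2}"
      using fit[OF \<open>x \<in> X\<close>] by simp
  qed
  then have "card X \<le> card {w2 * relu (W * \<beta> + b1) + b2}"
    by (intro card_mono) simp_all
  with \<open>2 \<le> card X\<close> show False
    by simp
qed

lemma fitted_bias_nonneg:
  assumes "0 < w2" "w2 * b1 + b2 = 0"
    and "relu (w2 * min (relu b1) (relu z) + b2) = 0"
  shows "0 \<le> b1"
proof (rule ccontr)
  assume "\<not> 0 \<le> b1"
  then have "min (relu b1) (relu z) = 0"
    by (simp add: relu_def)
  with assms(3) have "b2 \<le> 0"
    by (simp add: relu_def)
  moreover have "w2 * b1 < 0"
    using \<open>0 < w2\<close> \<open>\<not> 0 \<le> b1\<close> by (simp add: mult_pos_neg)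
  ultimately show False
    using assms(2) by linarith
qed

lemma gnn_eq_bf_min:
  assumes G: "G \<in> graphs_below \<beta>" and v: "v \<in> verts G"
    and params: "0 < c" "w2 * c = 1" "w2 * b1 + b2 = 0" "0 \<le> b1"
  shows "gnn w2 c c b1 b2 G v = Min ((\<lambda>u. nf G u + wt G u v) ` nbhd G v)"
proof -
  let ?N = "nbhd G v"
  let ?d = "\<lambda>u. nf G u + wt G u v"
  have "?N \<subseteq> verts G"
    using G v by (auto simp: graphs_below_def wf_graph_def nbhd_def)
  then have "finite ?N"
    using G finite_subset by (auto simp: graphs_below_def wf_graph_def)
  have "?N \<noteq> {}"
    by (simp add: nbhd_def)
  have d_nonneg: "0 \<le> ?d u" if "u \<in> ?N" for u
    using G \<open>?N \<subseteq> verts G\<close> that by (fastforce simp: graphs_below_def wt_def nbhd_def)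
  have "(\<lambda>u. relu (c * nf G u + c * wt G u v + b1)) ` ?N = (\<lambda>s. c * s + b1) ` ?d ` ?N"
    unfolding image_image
  proof (rule image_cong[OF refl])
    fix u assume "u \<in> ?N"
    then have "0 \<le> c * ?d u"
      using d_nonneg \<open>0 < c\<close> by simp
    then show "relu (c * nf G u + c * wt G u v + b1) = c * ?d u + b1"
      using \<open>0 \<le> b1\<close> by (simp add: relu_def algebra_simps)
  qed
  moreover have "Min ((\<lambda>s. c * s + b1) ` ?d ` ?N) = c * Min (?d ` ?N) + b1"
    using mono_Min_commute[of "\<lambda>s. c * s + b1" "?d ` ?N"] \<open>0 < c\<close> \<open>finite ?N\<close> \<open>?N \<noteq> {}\<close>
    by (simp add: mono_def)
  moreover have "w2 * (c * m + b1) + b2 = m" for m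
  proof -
    have "w2 * (c * m + b1) + b2 = (w2 * c) * m + (w2 * b1 + b2)"
      by (simp add: algebra_simps)
    then show ?thesis
      using params(2,3) by simp
  qed
  moreover have "0 \<le> Min (?d ` ?N)"
    using \<open>finite ?N\<close> \<open>?N \<noteq> {}\<close> d_nonneg by simp
  ultimately show ?thesis
    by (simp add: gnn_def relu_def)
qed

lemma fitted_parameters:
  fixes X Y :: "real set"
  assumes "4 \<le> card X" "4 \<le> card Y" and below: "\<forall>x\<in>X. x < \<beta>"
    and fit_leaf: "\<And>x. x \<in> X \<Longrightarrow> w2 * min (relu (W11 * \<beta> + b1)) (relu (W12 * x + b1)) + b2 = x"
    and fit_root: "\<And>x. x \<in> X \<Longrightarrow> relu (w2 * min (relu b1) (relu (W11 * \<beta> + W12 * x + b1)) + b2) = 0"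
    and fit_far: "\<And>y. y \<in> Y \<Longrightarrow> w2 * min (relu (W11 * \<beta> + b1)) (relu (W11 * y + b1)) + b2 = y"
  shows "W11 = W12 \<and> 0 < W12 \<and> w2 * W12 = 1 \<and> w2 * b1 + b2 = 0 \<and> 0 \<le> b1"
proof -
  have W12: "w2 * W12 = 1 \<and> w2 * b1 + b2 = 0"
    using min_relu_fit_on_four_points[OF \<open>4 \<le> card X\<close> fit_leaf] .
  have "w2 * W11 = 1"
    using min_relu_fit_on_four_points[OF \<open>4 \<le> card Y\<close> fit_far] by blast
  with W12 have "W11 = W12"
    by (metis mult_cancel_left mult_zero_left zero_neq_one)
  have "0 < w2"
  proof (rule fitted_slope_positive[of w2 W12 X \<beta> b1 b2])
    fix x assume "x \<in> X"
    show "w2 * min (relu (W12 * \<beta> + b1)) (relu (W12 * x + b1)) + b2 = x"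
      using fit_leaf[OF \<open>x \<in> X\<close>] \<open>W11 = W12\<close> by simp
  qed (use W12 \<open>4 \<le> card X\<close> below in auto)
  have "X \<noteq> {}"
    using \<open>4 \<le> card X\<close> by auto
  then obtain x where "x \<in> X"
    by blast
  have "0 \<le> b1"
    using fitted_bias_nonneg[OF \<open>0 < w2\<close>] W12 fit_root[OF \<open>x \<in> X\<close>] by blast
  have "0 < W12"
    using W12 \<open>0 < w2\<close> by (metis zero_less_mult_pos zero_less_one)
  show ?thesis
    using W12 \<open>W11 = W12\<close> \<open>0 < W12\<close> \<open>0 \<le> b1\<close> by blast
qed

theorem mainTheorem3:
  fixes \<beta> w2 W11 W12 b1 b2 :: real and a :: "nat \<Rightarrow> real"
    and G :: "'v agraph" and v :: 'v
  assumes beta_pos: "\<beta> > 0"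
    and distinct: "inj_on a {1..8}"
    and pos: "\<forall>i\<in>{1..8}. 0 < a i"
    and in_class: "\<forall>i\<in>{1..4}. path_graph \<beta> 0 [a i] \<in> graphs_below \<beta>"
    and in_class2: "\<forall>i\<in>{5..8}. path_graph \<beta> 1 [a i, 0] \<in> graphs_below \<beta>"
    and train1: "\<forall>i\<in>{1..4}. \<forall>u\<in>verts (path_graph \<beta> 0 [a i]).
        gnn w2 W11 W12 b1 b2 (path_graph \<beta> 0 [a i]) u = nf (bf (path_graph \<beta> 0 [a i])) u"
    and train2: "\<forall>i\<in>{5..8}. \<forall>u\<in>verts (path_graph \<beta> 1 [a i, 0]).
        gnn w2 W11 W12 b1 b2 (path_graph \<beta> 1 [a i, 0]) u = nf (bf (path_graph \<beta> 1 [a i, 0])) u"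
    and G: "G \<in> graphs_below \<beta>"
    and v: "v \<in> verts G"
  shows "gnn w2 W11 W12 b1 b2 G v = Min ((\<lambda>u. nf G u + wt G u v) ` nbhd G v)
       \<and> Min ((\<lambda>u. nf G u + wt G u v) ` nbhd G v) = nf (bf G) v"
proof -
  have single: "a i < \<beta>" "w2 * min (relu (W11 * \<beta> + b1)) (relu (W12 * a i + b1)) + b2 = a i"
    "relu (w2 * min (relu b1) (relu (W11 * \<beta> + W12 * a i + b1)) + b2) = 0" if "i \<in> {1..4}" for i
    using single_edge_training[OF bspec[OF in_class that] _ bspec[OF train1 that]] pos that by auto
  have two: "w2 * min (relu (W11 * \<beta> + b1)) (relu (W11 * a i + b1)) + b2 = a i" if "i \<in> {5..8}" for i
    using two_edge_training[OF bspec[OF in_class2 that] _ bspec[OF train2 that]] pos that by auto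
  have "card (a ` {1..4}) = 4" "card (a ` {5..8}) = 4"
    using card_image[OF inj_on_subset[OF distinct]] by simp_all
  then have params: "W11 = W12 \<and> 0 < W12 \<and> w2 * W12 = 1 \<and> w2 * b1 + b2 = 0 \<and> 0 \<le> b1"
    by (intro fitted_parameters[where X = "a ` {1..4}" and Y = "a ` {5..8}" and \<beta> = \<beta>]) (auto simp: single two)
  then have "gnn w2 W12 W12 b1 b2 G v = Min ((\<lambda>u. nf G u + wt G u v) ` nbhd G v)"
    using gnn_eq_bf_min[OF G v] by blast
  then show ?thesis
    using params by (simp add: bf_nf)
qed

end
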